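(* Let $n\ge 1$, let $\beta\in[0,1)$, let $B_0\in\mathbb{R}^{n\times n}$ be symmetric positive definite, and let $P_f\in\mathbb{R}^{n\times n}$ be symmetric positive semidefinite and rank deficient. Let $B=(1-\beta)B_0+\beta P_f$. Then \[ \max\left[\frac{1}{\kappa(B_0)}+\frac{\beta\lambda_1(P_f)}{(1-\beta)\lambda_1(B_0)},\ \left(\frac{1}{\kappa(B_0)}+\frac{\beta\lambda_1(P_f)}{(1-\beta)\lambda_1(B_0)}\right)^{-1}\right]\le \kappa(B)\le \kappa(B_0)\left(1+\frac{\beta\lambda_1(P_f)}{(1-\beta)\lambda_1(B_0)}\right). \]
   Context: For a symmetric matrix $A\in\mathbb{R}^{n\times n}$, $\lambda_k(A)$ denotes its $k$-th largest eigenvalue ($\lambda_1$ largest, $\lambda_n$ smallest). For a symmetric positive definite matrix $A$, the condition number is $\kappa(A)=\lambda_1(A)/\lambda_n(A)$. *)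

theory Defs
  imports "HOL-Analysis.Analysis"
begin

text \<open>Real n x n matrices are rendered as real^'n^'n, with n = CARD('n) \<ge> 1.\<close>

definition sym_mat :: "real^'n^'n \<Rightarrow> bool" where
  "sym_mat A \<longleftrightarrow> transpose A = A"

definition pos_def :: "real^'n^'n \<Rightarrow> bool" where
  "pos_def A \<longleftrightarrow> sym_mat A \<and> (\<forall>x. x \<noteq> 0 \<longrightarrow> x \<bullet> (A *v x) > 0)"

definition pos_semidef :: "real^'n^'n \<Rightarrow> bool" where
  "pos_semidef A \<longleftrightarrow> sym_mat A \<and> (\<forall>x. x \<bullet> (A *v x) \<ge> 0)"

definition is_eigenvalue :: "real^'n^'n \<Rightarrow> real \<Rightarrow> bool" where
  "is_eigenvalue A c \<longleftrightarrow> (\<exists>v. v \<noteq> 0 \<and> A *v v = c *\<^sub>R v)"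

text \<open>Largest eigenvalue lambda_1 and smallest eigenvalue lambda_n (meaningful for symmetric A).\<close>
definition lambda_max :: "real^'n^'n \<Rightarrow> real" where
  "lambda_max A = Max {c. is_eigenvalue A c}"

definition lambda_min :: "real^'n^'n \<Rightarrow> real" where
  "lambda_min A = Min {c. is_eigenvalue A c}"

definition cond_num :: "real^'n^'n \<Rightarrow> real" where
  "cond_num A = lambda_max A / lambda_min A"

end

theory Submission
  imports Defs
begin

text \<open>The extreme eigenvalues of a symmetric matrix are the extreme values of its quadratic form
on the unit sphere.  Evaluating the form of \<open>B\<close> at unit eigenvectors for the extreme
eigenvalues of \<open>B\<close>, of \<open>B0\<close> and of \<open>Pf\<close> (Weyl's inequalities), and at a null vector of
the singular matrix \<open>Pf\<close>, pins \<open>\<lambda>\<^sub>1(B)\<close> and \<open>\<lambda>\<^sub>n(B)\<close> between affine combinations of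
\<open>\<lambda>\<^sub>1(B0)\<close>, \<open>\<lambda>\<^sub>n(B0)\<close> and \<open>\<lambda>\<^sub>1(Pf)\<close>; dividing these enclosures gives both bounds
on \<open>\<kappa>(B)\<close>.\<close>

lemma linear_coeff_zero_if_quadratic_nonneg:
  fixes b c :: real
  assumes "\<And>t. 0 \<le> b * t + c * t\<^sup>2"
  shows "b = 0"
proof (rule ccontr)
  assume "b \<noteq> 0"
  define k where "k = \<bar>c\<bar> + 1"
  have "k > 0" by (simp add: k_def add_nonneg_pos)
  define t where "t = - b / k"
  have "b * t + c * t\<^sup>2 \<le> b * t + (k - 1) * t\<^sup>2"
    by (simp add: k_def mult_right_mono)
  also have "\<dots> = - b\<^sup>2 / k\<^sup>2"
    using \<open>k > 0\<close> by (simp add: t_def field_simps power2_eq_square)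
  also have "\<dots> < 0"
    using \<open>b \<noteq> 0\<close> \<open>k > 0\<close> by simp
  finally show False using assms[of t] by linarith
qed

lemma sym_mat_add: "sym_mat A \<Longrightarrow> sym_mat B \<Longrightarrow> sym_mat (A + B)"
  by (simp add: sym_mat_def transpose_def vec_eq_iff)

lemma sym_mat_diff: "sym_mat A \<Longrightarrow> sym_mat B \<Longrightarrow> sym_mat (A - B)"
  by (simp add: sym_mat_def transpose_def vec_eq_iff)

lemma sym_mat_scaleR: "sym_mat A \<Longrightarrow> sym_mat (c *\<^sub>R A)"
  by (simp add: sym_mat_def transpose_scalar)

lemma sym_mat_uminus: "sym_mat A \<Longrightarrow> sym_mat (- A)"
  by (simp add: sym_mat_def transpose_def vec_eq_iff)

lemma sym_mat_mat: "sym_mat (mat c)"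
  by (simp add: sym_mat_def)

lemma sym_mat_inner_mult:
  fixes A :: "real^'n^'n"
  assumes "sym_mat A"
  shows "x \<bullet> (A *v y) = (A *v x) \<bullet> y"
proof -
  have "(A *v x) \<bullet> y = (transpose A *v x) \<bullet> y" using assms by (simp add: sym_mat_def)
  also have "\<dots> = x \<bullet> (A *v y)" by (simp add: dot_lmul_matrix)
  finally show ?thesis by simp
qed

lemma sym_mat_nonneg_form_zero_imp_zero:
  fixes C :: "real^'n^'n"
  assumes "sym_mat C" and "\<And>y. 0 \<le> y \<bullet> (C *v y)" and "x \<bullet> (C *v x) = 0"
  shows "C *v x = 0"
proof -
  define u where "u = C *v x"
  have "0 \<le> (2 * (u \<bullet> u)) * t + (u \<bullet> (C *v u)) * t\<^sup>2" for t
  proof -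
    have "x \<bullet> (C *v u) = u \<bullet> u"
      using sym_mat_inner_mult[OF assms(1)] by (simp add: u_def)
    then have "(x + t *\<^sub>R u) \<bullet> (C *v (x + t *\<^sub>R u)) = (2 * (u \<bullet> u)) * t + (u \<bullet> (C *v u)) * t\<^sup>2"
      using assms(3)
      by (simp add: algebra_simps inner_add_left inner_add_right u_def power2_eq_square inner_commute)
    then show ?thesis using assms(2) by metis
  qed
  then have "2 * (u \<bullet> u) = 0" by (rule linear_coeff_zero_if_quadratic_nonneg)
  then show ?thesis by (simp add: u_def)
qed

lemma matrix_vector_mult_uminus:
  fixes A :: "real^'n^'m"
  shows "(- A) *v x = - (A *v x)"
  using scaleR_matrix_vector_assoc[of "-1" A x] by simp

lemma is_eigenvalue_uminus: "is_eigenvalue (- A) c \<longleftrightarrow> is_eigenvalue A (- c)"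
  unfolding is_eigenvalue_def matrix_vector_mult_uminus by (metis minus_minus scaleR_minus_left)

lemma finite_eigenvalues:
  fixes A :: "real^'n^'n"
  assumes "sym_mat A"
  shows "finite {c. is_eigenvalue A c}"
proof -
  define E where "E = {c. is_eigenvalue A c}"
  have "\<forall>c\<in>E. \<exists>v. v \<noteq> 0 \<and> A *v v = c *\<^sub>R v"
    by (simp add: E_def is_eigenvalue_def)
  then obtain v where v: "\<And>c. c \<in> E \<Longrightarrow> v c \<noteq> 0 \<and> A *v v c = c *\<^sub>R v c"
    by metis
  have "inj_on v E"
  proof (rule inj_onI)
    fix c d assume "c \<in> E" "d \<in> E" "v c = v d"
    then have "c *\<^sub>R v c = d *\<^sub>R v c" "v c \<noteq> 0" using v by metis+
    then show "c = d" by simp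
  qed
  moreover have "pairwise orthogonal (v ` E)"
  proof (rule pairwiseI, clarify)
    fix c d assume cd: "c \<in> E" "d \<in> E" "v c \<noteq> v d"
    have "c * (v c \<bullet> v d) = v c \<bullet> (A *v v d)"
      using sym_mat_inner_mult[OF assms] v[OF cd(1)] by simp
    also have "\<dots> = d * (v c \<bullet> v d)"
      using v[OF cd(2)] by simp
    finally have "(c - d) * (v c \<bullet> v d) = 0" by (simp add: algebra_simps)
    moreover have "c \<noteq> d" using cd(3) by blast
    ultimately show "orthogonal (v c) (v d)" by (simp add: orthogonal_def)
  qed
  moreover have "0 \<notin> v ` E" using v by auto
  ultimately have "finite (v ` E)"
    using independent_bound pairwise_orthogonal_independent by blast
  then show ?thesis using finite_imageD \<open>inj_on v E\<close> E_def by blast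
qed

lemma unit_eigenvector:
  fixes A :: "real^'n^'n"
  assumes "is_eigenvalue A c"
  obtains x where "x \<bullet> x = 1" and "x \<bullet> (A *v x) = c"
proof -
  obtain v where v: "v \<noteq> 0" "A *v v = c *\<^sub>R v"
    using assms by (auto simp: is_eigenvalue_def)
  define x where "x = v /\<^sub>R norm v"
  have "x \<bullet> x = 1" using v(1) by (simp add: x_def dot_square_norm)
  moreover have "x \<bullet> (A *v x) = c"
    using v \<open>x \<bullet> x = 1\<close> by (simp add: x_def matrix_vector_mult_scaleR)
  ultimately show thesis by (rule that)
qed

lemma lambda_max_rayleigh:
  fixes A :: "real^'n^'n"
  assumes "sym_mat A"
  shows "is_eigenvalue A (lambda_max A)" and "x \<bullet> (A *v x) \<le> lambda_max A * (x \<bullet> x)"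
proof -
  define q where "q y = y \<bullet> (A *v y)" for y :: "real^'n"
  have "continuous_on (sphere 0 1) q"
    unfolding q_def by (intro continuous_intros linear_continuous_on) (simp add: bounded_linear_intros)
  moreover have "sphere (0::real^'n) 1 \<noteq> {}" by simp
  ultimately obtain x0 where x0: "x0 \<in> sphere 0 1" and max: "\<And>y. y \<in> sphere 0 1 \<Longrightarrow> q y \<le> q x0"
    using continuous_attains_sup[OF compact_sphere] by blast
  define M where "M = q x0"
  have bound: "q y \<le> M * (y \<bullet> y)" for y
  proof (cases "y = 0")
    case False
    have "q y = (y \<bullet> y) * q (y /\<^sub>R norm y)"
      using False by (simp add: q_def matrix_vector_mult_scaleR power2_norm_eq_inner[symmetric]
          power2_eq_square field_simps)
    also have "\<dots> \<le> (y \<bullet> y) * M"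
      using False max[of "y /\<^sub>R norm y"] by (simp add: M_def mult_left_mono)
    finally show ?thesis by (simp add: mult.commute)
  qed (simp add: q_def)
  have shift: "(M *\<^sub>R mat 1 - A) *v y = M *\<^sub>R y - A *v y" for y
    by (simp add: matrix_vector_mult_diff_rdistrib scaleR_matrix_vector_assoc[symmetric])
  txt \<open>The maximiser \<open>x0\<close> is an eigenvector: \<open>M I - A\<close> is positive semidefinite and its
    form vanishes at \<open>x0\<close>.\<close>
  have "(M *\<^sub>R mat 1 - A) *v x0 = 0"
  proof (rule sym_mat_nonneg_form_zero_imp_zero)
    show "sym_mat (M *\<^sub>R mat 1 - A)"
      using assms by (intro sym_mat_diff sym_mat_scaleR sym_mat_mat)
    show "0 \<le> y \<bullet> ((M *\<^sub>R mat 1 - A) *v y)" for y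
      using bound[of y] by (simp add: shift q_def inner_diff_right)
    show "x0 \<bullet> ((M *\<^sub>R mat 1 - A) *v x0) = 0"
      using x0 unfolding shift by (simp add: q_def M_def inner_diff_right dot_square_norm)
  qed
  then have "A *v x0 = M *\<^sub>R x0" by (simp add: shift)
  moreover have "x0 \<noteq> 0" using x0 by auto
  ultimately have "is_eigenvalue A M" by (auto simp: is_eigenvalue_def)
  moreover have "c \<le> M" if "is_eigenvalue A c" for c
  proof -
    obtain v where "v \<bullet> v = 1" "v \<bullet> (A *v v) = c"
      using \<open>is_eigenvalue A c\<close> by (rule unit_eigenvector)
    then show ?thesis using bound[of v] by (simp add: q_def)
  qed
  ultimately have "lambda_max A = M"
    unfolding lambda_max_def using finite_eigenvalues[OF assms] by (intro Max_eqI) auto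
  with \<open>is_eigenvalue A M\<close> bound show "is_eigenvalue A (lambda_max A)"
    and "x \<bullet> (A *v x) \<le> lambda_max A * (x \<bullet> x)" by (simp_all add: q_def)
qed

lemma lambda_min_eq_uminus_lambda_max:
  fixes A :: "real^'n^'n"
  assumes "sym_mat A"
  shows "lambda_min A = - lambda_max (- A)"
proof -
  define E where "E = {c. is_eigenvalue A c}"
  have "{c. is_eigenvalue (- A) c} = uminus ` E"
    by (force simp: E_def is_eigenvalue_uminus)
  moreover have "finite E" "E \<noteq> {}"
    using finite_eigenvalues[OF assms] lambda_max_rayleigh(1)[OF assms] by (auto simp: E_def)
  ultimately show ?thesis
    by (simp add: lambda_min_def lambda_max_def E_def image_image)
qed

lemma lambda_min_rayleigh:
  fixes A :: "real^'n^'n"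
  assumes "sym_mat A"
  shows "is_eigenvalue A (lambda_min A)" and "lambda_min A * (x \<bullet> x) \<le> x \<bullet> (A *v x)"
  using lambda_max_rayleigh(1)[OF sym_mat_uminus[OF assms]]
    lambda_max_rayleigh(2)[OF sym_mat_uminus[OF assms], of x]
  by (simp_all add: lambda_min_eq_uminus_lambda_max[OF assms] is_eigenvalue_uminus
      matrix_vector_mult_uminus)

lemma quadratic_form_add:
  fixes A P :: "real^'n^'n"
  shows "x \<bullet> ((A + P) *v x) = x \<bullet> (A *v x) + x \<bullet> (P *v x)"
  by (simp add: matrix_vector_mult_add_rdistrib inner_add_right)

lemma quadratic_form_scaleR:
  fixes A :: "real^'n^'n"
  shows "x \<bullet> ((c *\<^sub>R A) *v x) = c * (x \<bullet> (A *v x))"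
  by (simp add: scaleR_matrix_vector_assoc[symmetric])

lemma lambda_max_add_le:
  fixes A P :: "real^'n^'n"
  assumes "sym_mat A" and "sym_mat P"
  shows "lambda_max (A + P) \<le> lambda_max A + lambda_max P"
proof -
  obtain x where "x \<bullet> x = 1" and "x \<bullet> ((A + P) *v x) = lambda_max (A + P)"
    using lambda_max_rayleigh(1)[OF sym_mat_add[OF assms]] by (rule unit_eigenvector)
  then show ?thesis
    using lambda_max_rayleigh(2)[OF assms(1), of x] lambda_max_rayleigh(2)[OF assms(2), of x]
    by (simp add: quadratic_form_add)
qed

lemma lambda_min_add_ge:
  fixes A P :: "real^'n^'n"
  assumes "sym_mat A" and "sym_mat P"
  shows "lambda_min A + lambda_min P \<le> lambda_min (A + P)"
proof -
  obtain x where "x \<bullet> x = 1" and "x \<bullet> ((A + P) *v x) = lambda_min (A + P)"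
    using lambda_min_rayleigh(1)[OF sym_mat_add[OF assms]] by (rule unit_eigenvector)
  then show ?thesis
    using lambda_min_rayleigh(2)[OF assms(1), of x] lambda_min_rayleigh(2)[OF assms(2), of x]
    by (simp add: quadratic_form_add)
qed

lemma lambda_max_add_ge:
  fixes A P :: "real^'n^'n"
  assumes "sym_mat A" and "sym_mat P"
  shows "lambda_max A + lambda_min P \<le> lambda_max (A + P)"
proof -
  obtain x where "x \<bullet> x = 1" and "x \<bullet> (A *v x) = lambda_max A"
    using lambda_max_rayleigh(1)[OF assms(1)] by (rule unit_eigenvector)
  then show ?thesis
    using lambda_min_rayleigh(2)[OF assms(2), of x]
      lambda_max_rayleigh(2)[OF sym_mat_add[OF assms], of x]
    by (simp add: quadratic_form_add)
qed

lemma lambda_min_add_le: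
  fixes A P :: "real^'n^'n"
  assumes "sym_mat A" and "sym_mat P"
  shows "lambda_min (A + P) \<le> lambda_min A + lambda_max P"
proof -
  obtain x where "x \<bullet> x = 1" and "x \<bullet> (A *v x) = lambda_min A"
    using lambda_min_rayleigh(1)[OF assms(1)] by (rule unit_eigenvector)
  then show ?thesis
    using lambda_max_rayleigh(2)[OF assms(2), of x]
      lambda_min_rayleigh(2)[OF sym_mat_add[OF assms], of x]
    by (simp add: quadratic_form_add)
qed

lemma lambda_max_scaleR:
  fixes A :: "real^'n^'n"
  assumes "sym_mat A" and "0 \<le> c"
  shows "lambda_max (c *\<^sub>R A) = c * lambda_max A"
proof -
  have cA: "sym_mat (c *\<^sub>R A)" using assms(1) by (rule sym_mat_scaleR)
  obtain x where x: "x \<bullet> x = 1" "x \<bullet> ((c *\<^sub>R A) *v x) = lambda_max (c *\<^sub>R A)"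
    using lambda_max_rayleigh(1)[OF cA] by (rule unit_eigenvector)
  obtain y where y: "y \<bullet> y = 1" "y \<bullet> (A *v y) = lambda_max A"
    using lambda_max_rayleigh(1)[OF assms(1)] by (rule unit_eigenvector)
  have "lambda_max (c *\<^sub>R A) = c * (x \<bullet> (A *v x))"
    using x(2) by (simp add: quadratic_form_scaleR)
  also have "\<dots> \<le> c * lambda_max A"
    using lambda_max_rayleigh(2)[OF assms(1), of x] x(1) assms(2) by (intro mult_left_mono) simp_all
  finally have "lambda_max (c *\<^sub>R A) \<le> c * lambda_max A" .
  moreover have "c * lambda_max A \<le> lambda_max (c *\<^sub>R A)"
    using lambda_max_rayleigh(2)[OF cA, of y] y by (simp add: quadratic_form_scaleR)
  ultimately show ?thesis by linarith
qed

lemma lambda_min_scaleR: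
  fixes A :: "real^'n^'n"
  assumes "sym_mat A" and "0 \<le> c"
  shows "lambda_min (c *\<^sub>R A) = c * lambda_min A"
proof -
  have cA: "sym_mat (c *\<^sub>R A)" using assms(1) by (rule sym_mat_scaleR)
  obtain x where x: "x \<bullet> x = 1" "x \<bullet> ((c *\<^sub>R A) *v x) = lambda_min (c *\<^sub>R A)"
    using lambda_min_rayleigh(1)[OF cA] by (rule unit_eigenvector)
  obtain y where y: "y \<bullet> y = 1" "y \<bullet> (A *v y) = lambda_min A"
    using lambda_min_rayleigh(1)[OF assms(1)] by (rule unit_eigenvector)
  have "c * lambda_min A \<le> c * (x \<bullet> (A *v x))"
    using lambda_min_rayleigh(2)[OF assms(1), of x] x(1) assms(2) by (intro mult_left_mono) simp_all
  also have "\<dots> = lambda_min (c *\<^sub>R A)"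
    using x(2) by (simp add: quadratic_form_scaleR)
  finally have "c * lambda_min A \<le> lambda_min (c *\<^sub>R A)" .
  moreover have "lambda_min (c *\<^sub>R A) \<le> c * lambda_min A"
    using lambda_min_rayleigh(2)[OF cA, of y] y by (simp add: quadratic_form_scaleR)
  ultimately show ?thesis by linarith
qed

lemma pos_def_lambda_min_pos:
  fixes A :: "real^'n^'n"
  assumes "pos_def A"
  shows "0 < lambda_min A"
proof -
  have "sym_mat A" using assms by (simp add: pos_def_def)
  then obtain x where "x \<bullet> x = 1" and "x \<bullet> (A *v x) = lambda_min A"
    using lambda_min_rayleigh(1) unit_eigenvector by blast
  moreover have "x \<noteq> 0" using \<open>x \<bullet> x = 1\<close> by auto
  ultimately show ?thesis using assms by (auto simp: pos_def_def)
qed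

lemma pos_semidef_singular_lambda_min:
  fixes P :: "real^'n^'n"
  assumes "pos_semidef P" and "rank P < CARD('n)"
  shows "lambda_min P = 0"
proof -
  have "sym_mat P" using assms(1) by (simp add: pos_semidef_def)
  obtain y where "y \<noteq> 0" and "P *v y = 0"
    using assms(2) matrix_nonfull_linear_equations_eq by (metis less_irrefl)
  then have "lambda_min P * (y \<bullet> y) \<le> 0" and "0 < y \<bullet> y"
    using lambda_min_rayleigh(2)[OF \<open>sym_mat P\<close>, of y] by auto
  then have "lambda_min P \<le> 0" by (simp add: mult_le_0_iff)
  moreover obtain x where "x \<bullet> (P *v x) = lambda_min P"
    using lambda_min_rayleigh(1)[OF \<open>sym_mat P\<close>] by (rule unit_eigenvector)
  then have "0 \<le> lambda_min P" using assms(1) by (metis pos_semidef_def)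
  ultimately show ?thesis by simp
qed

lemma ratio_bounds_from_extreme_value_bounds:
  fixes a b p L l \<beta> :: real
  assumes "0 < b" and "\<beta> < 1"
    and L_upper: "L \<le> (1 - \<beta>) * a + \<beta> * p" and l_lower: "(1 - \<beta>) * b \<le> l"
    and L_lower: "(1 - \<beta>) * a \<le> L" and l_upper: "l \<le> (1 - \<beta>) * b + \<beta> * p"
    and L_lower': "(1 - \<beta>) * b + \<beta> * p \<le> L" and l_upper': "l \<le> (1 - \<beta>) * a"
  defines "s \<equiv> 1 / (a / b) + \<beta> * p / ((1 - \<beta>) * a)"
  shows "max s (inverse s) \<le> L / l \<and> L / l \<le> a / b * (1 + \<beta> * p / ((1 - \<beta>) * a))"
proof -
  have "0 < (1 - \<beta>) * b" using assms(1,2) by simp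
  then have "0 < l" and "0 < (1 - \<beta>) * a" and "0 < L" using l_lower l_upper' L_lower
    by linarith+
  then have "0 < a" using \<open>\<beta> < 1\<close> by (simp add: zero_less_mult_iff)
  have "(1 - \<beta>) * b / ((1 - \<beta>) * a) = b / a" using \<open>\<beta> < 1\<close> by simp
  then have s_eq: "s = ((1 - \<beta>) * b + \<beta> * p) / ((1 - \<beta>) * a)"
    by (simp add: s_def add_divide_distrib)
  have "s \<le> L / l"
    unfolding s_eq using \<open>0 < l\<close> \<open>0 < L\<close> L_lower' l_upper' by (intro frac_le) simp_all
  moreover have "inverse s \<le> L / l"
    unfolding s_eq inverse_divide using \<open>0 < l\<close> \<open>0 < L\<close> L_lower l_upper
    by (intro frac_le) simp_all
  moreover have "a / b * (1 + \<beta> * p / ((1 - \<beta>) * a)) = ((1 - \<beta>) * a + \<beta> * p) / ((1 - \<beta>) * b)"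
    using \<open>0 < a\<close> \<open>0 < b\<close> \<open>\<beta> < 1\<close> by (simp add: field_simps)
  moreover have "L / l \<le> ((1 - \<beta>) * a + \<beta> * p) / ((1 - \<beta>) * b)"
    using \<open>0 < (1 - \<beta>) * b\<close> \<open>0 < L\<close> L_upper l_lower by (intro frac_le) simp_all
  ultimately show ?thesis by simp
qed

theorem lemma2:
  fixes B0 Pf :: "real^'n^'n" and \<beta> :: real
  assumes "0 \<le> \<beta>" and "\<beta> < 1"
    and "pos_def B0"
    and "pos_semidef Pf"
    and "rank Pf < CARD('n)"
  defines "B \<equiv> (1 - \<beta>) *\<^sub>R B0 + \<beta> *\<^sub>R Pf"
  shows "max (1 / cond_num B0 + \<beta> * lambda_max Pf / ((1 - \<beta>) * lambda_max B0))
             (inverse (1 / cond_num B0 + \<beta> * lambda_max Pf / ((1 - \<beta>) * lambda_max B0)))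
           \<le> cond_num B \<and>
         cond_num B \<le> cond_num B0 * (1 + \<beta> * lambda_max Pf / ((1 - \<beta>) * lambda_max B0))"
proof -
  have "sym_mat B0" and "sym_mat Pf"
    using assms(3,4) by (simp_all add: pos_def_def pos_semidef_def)
  then have A: "sym_mat ((1 - \<beta>) *\<^sub>R B0)" and P: "sym_mat (\<beta> *\<^sub>R Pf)"
    by (simp_all add: sym_mat_scaleR)
  have scaled: "lambda_max ((1 - \<beta>) *\<^sub>R B0) = (1 - \<beta>) * lambda_max B0"
    "lambda_min ((1 - \<beta>) *\<^sub>R B0) = (1 - \<beta>) * lambda_min B0"
    "lambda_max (\<beta> *\<^sub>R Pf) = \<beta> * lambda_max Pf" "lambda_min (\<beta> *\<^sub>R Pf) = 0"
    using \<open>sym_mat B0\<close> \<open>sym_mat Pf\<close> assms(1,2,4,5)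
    by (simp_all add: lambda_max_scaleR lambda_min_scaleR pos_semidef_singular_lambda_min)
  have "lambda_max B \<le> (1 - \<beta>) * lambda_max B0 + \<beta> * lambda_max Pf"
    and "(1 - \<beta>) * lambda_min B0 \<le> lambda_min B"
    and "(1 - \<beta>) * lambda_max B0 \<le> lambda_max B"
    and "lambda_min B \<le> (1 - \<beta>) * lambda_min B0 + \<beta> * lambda_max Pf"
    using lambda_max_add_le[OF A P] lambda_min_add_ge[OF A P] lambda_max_add_ge[OF A P]
      lambda_min_add_le[OF A P]
    by (simp_all add: B_def scaled)
  moreover have "B = \<beta> *\<^sub>R Pf + (1 - \<beta>) *\<^sub>R B0" by (simp add: B_def)
  then have "(1 - \<beta>) * lambda_min B0 + \<beta> * lambda_max Pf \<le> lambda_max B"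
    and "lambda_min B \<le> (1 - \<beta>) * lambda_max B0"
    using lambda_max_add_ge[OF P A] lambda_min_add_le[OF P A] by (simp_all add: scaled)
  ultimately show ?thesis
    unfolding cond_num_def
    by (intro ratio_bounds_from_extreme_value_bounds[OF pos_def_lambda_min_pos[OF assms(3)] assms(2)])
qed

end
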